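(* Let $\mathcal C\subseteq 2^{[n]}$ be a degree two code. Then a neuron $i\in[n]$ is a $k$-piercing of $\mathcal C$ if and only if $i$ is an elimination neuron with exactly $k$ neighbors in $G(\mathcal C)$.
   Context: A code is a set $\mathcal C\subseteq 2^{[n]}$, $[n]=\{1,\dots,n\}$, elements of $[n]$ being neurons. Standing conventions: $\emptyset\in\mathcal C$; every neuron lies in some codeword; no two distinct neurons lie in exactly the same codewords. $\mathcal C\setminus i$ is obtained by removing $i$ from every codeword. For $\sigma\subseteq\tau$, $[\sigma,\tau]=\{\gamma:\sigma\subseteq\gamma\subseteq\tau\}$, of rank $|\tau\setminus\sigma|$. A neuron $i$ is a $k$-piercing of $\mathcal C$ if there are $\sigma\subseteq\tau\subseteq[n]\setminus\{i\}$ with $[\sigma,\tau]$ of rank $k$, $[\sigma,\tau]\subseteq\mathcal C\setminus i$, and $\mathcal C=(\mathcal C\setminus i)\cup[\sigma\cup\{i\},\tau\cup\{i\}]$. A pseudo-monomial in $\mathbb F_2[x_1,\dots,x_n]$ is $\prod_{i\in\sigma}x_i\prod_{j\in\tau}(1-x_j)$ with $\sigma\cap\tau=\emptyset$, ordered by divisibility. $J_\mathcal C=\langle\rho_\sigma:\sigma\notin\mathcal C\rangle$ with $\rho_\sigma=\prod_{i\in\sigma}x_i\prod_{j\notin\sigma}(1-x_j)$; $\mathrm{CF}(J_\mathcal C)$ is the set of minimal pseudo-monomials in $J_\mathcal C$. $\mathcal C$ is degree two if every element of $\mathrm{CF}(J_\mathcal C)$ has degree two. For degree two $\mathcal C$: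 $G(\mathcal C)$ is the graph on $[n]$ with edge $ij$ whenever $\mathrm{CF}(J_\mathcal C)$ contains no pseudo-monomial whose two variables are $x_i,x_j$; $P(\mathcal C)$ is the partial order on $[n]$ with $i<j$ iff $x_i(1-x_j)\in\mathrm{CF}(J_\mathcal C)$. A neuron $i$ is an elimination neuron if it is a simplicial vertex of $G(\mathcal C)$ (its neighborhood is a clique) and a minimal element of $P(\mathcal C)$. *)

theory Defs
  imports Main "HOL-Library.Poly_Mapping" "HOL-Library.Z2"
begin

text \<open>A monomial is an exponent vector finitely supported map nat to nat; a polynomial in F_2[x_1,...,x_n]
  is a finitely supported map from monomials to bit (the field F_2) whose monomials
  only involve variables in {1..n}.\<close>

type_synonym poly2 = "(nat \<Rightarrow>\<^sub>0 nat) \<Rightarrow>\<^sub>0 bit"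

definition var :: "nat \<Rightarrow> poly2" where
  "var i = Poly_Mapping.single (Poly_Mapping.single i 1) 1"

definition in_ring :: "nat \<Rightarrow> poly2 \<Rightarrow> bool" where
  "in_ring n f \<longleftrightarrow> (\<forall>m \<in> Poly_Mapping.keys f. Poly_Mapping.keys m \<subseteq> {1..n})"

definition pm :: "nat set \<Rightarrow> nat set \<Rightarrow> poly2" where
  "pm s t = (\<Prod>i\<in>s. var i) * (\<Prod>j\<in>t. 1 - var j)"

definition is_pm :: "nat \<Rightarrow> nat set \<Rightarrow> nat set \<Rightarrow> bool" where
  "is_pm n s t \<longleftrightarrow> s \<subseteq> {1..n} \<and> t \<subseteq> {1..n} \<and> s \<inter> t = {}"

definition rho :: "nat \<Rightarrow> nat set \<Rightarrow> poly2" where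
  "rho n s = pm s ({1..n} - s)"

definition in_JC :: "nat \<Rightarrow> nat set set \<Rightarrow> poly2 \<Rightarrow> bool" where
  "in_JC n C f \<longleftrightarrow> (\<exists>g :: nat set \<Rightarrow> poly2.
      (\<forall>s. in_ring n (g s)) \<and>
      f = (\<Sum>s \<in> Pow {1..n} - C. g s * rho n s))"

definition CF :: "nat \<Rightarrow> nat set set \<Rightarrow> (nat set \<times> nat set) set" where
  "CF n C = {(s, t). is_pm n s t \<and> in_JC n C (pm s t) \<and>
      \<not> (\<exists>s' t'. is_pm n s' t' \<and> in_JC n C (pm s' t') \<and>
           pm s' t' dvd pm s t \<and> pm s' t' \<noteq> pm s t)}"

definition is_code :: "nat \<Rightarrow> nat set set \<Rightarrow> bool" where
  "is_code n C \<longleftrightarrow> C \<subseteq> Pow {1..n} \<and> {} \<in> C \<and>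
     (\<forall>i \<in> {1..n}. \<exists>c \<in> C. i \<in> c) \<and>
     (\<forall>i \<in> {1..n}. \<forall>j \<in> {1..n}. i \<noteq> j \<longrightarrow> {c \<in> C. i \<in> c} \<noteq> {c \<in> C. j \<in> c})"

definition delete_neuron :: "nat set set \<Rightarrow> nat \<Rightarrow> nat set set" where
  "delete_neuron C i = (\<lambda>c. c - {i}) ` C"

definition interval :: "nat set \<Rightarrow> nat set \<Rightarrow> nat set set" where
  "interval s t = {g. s \<subseteq> g \<and> g \<subseteq> t}"

definition is_piercing :: "nat \<Rightarrow> nat set set \<Rightarrow> nat \<Rightarrow> nat \<Rightarrow> bool" where
  "is_piercing n C i k \<longleftrightarrow> (\<exists>s t. s \<subseteq> t \<and> t \<subseteq> {1..n} - {i} \<and> card (t - s) = k \<and>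
      interval s t \<subseteq> delete_neuron C i \<and>
      C = delete_neuron C i \<union> interval (insert i s) (insert i t))"

definition degree_two :: "nat \<Rightarrow> nat set set \<Rightarrow> bool" where
  "degree_two n C \<longleftrightarrow> (\<forall>(s, t) \<in> CF n C. card s + card t = 2)"

definition G_edge :: "nat \<Rightarrow> nat set set \<Rightarrow> nat \<Rightarrow> nat \<Rightarrow> bool" where
  "G_edge n C i j \<longleftrightarrow> i \<in> {1..n} \<and> j \<in> {1..n} \<and> i \<noteq> j \<and>
     \<not> (\<exists>(s, t) \<in> CF n C. s \<union> t = {i, j})"

definition G_nbrs :: "nat \<Rightarrow> nat set set \<Rightarrow> nat \<Rightarrow> nat set" where
  "G_nbrs n C i = {j. G_edge n C i j}"

definition simplicial :: "nat \<Rightarrow> nat set set \<Rightarrow> nat \<Rightarrow> bool" where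
  "simplicial n C i \<longleftrightarrow> (\<forall>j \<in> G_nbrs n C i. \<forall>l \<in> G_nbrs n C i. j \<noteq> l \<longrightarrow> G_edge n C j l)"

definition P_less :: "nat \<Rightarrow> nat set set \<Rightarrow> nat \<Rightarrow> nat \<Rightarrow> bool" where
  "P_less n C i j \<longleftrightarrow> ({i}, {j}) \<in> CF n C"

definition P_minimal :: "nat \<Rightarrow> nat set set \<Rightarrow> nat \<Rightarrow> bool" where
  "P_minimal n C i \<longleftrightarrow> i \<in> {1..n} \<and> \<not> (\<exists>j \<in> {1..n}. P_less n C j i)"

definition elimination_neuron :: "nat \<Rightarrow> nat set set \<Rightarrow> nat \<Rightarrow> bool" where
  "elimination_neuron n C i \<longleftrightarrow> i \<in> {1..n} \<and> simplicial n C i \<and> P_minimal n C i"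

end

theory Submission
  imports Defs
begin

(*
  Evaluating at 0/1 points shows that a pseudo-monomial x_s (1 - x_t) lies in J_C iff it
  vanishes on C, i.e. iff no codeword contains s and avoids t; so CF(J_C) consists of the
  inclusion-minimal such pairs (s, t). When C has degree two, every non-codeword is detected
  by two neurons: a set is a codeword iff each of its restrictions to two neurons is the
  restriction of a codeword. In these terms ij is an edge of G(C) iff C restricted to {i, j}
  is all of 2^{i, j}, and i is minimal in P(C) iff C is closed under deleting i.

  Let I and U be the intersection and the union of the codewords containing i. That i is a
  k-piercing says exactly that C is closed under deleting i and that the codewords containing
  i form the whole interval [I, U], where |U - I| = k. For P-minimal i the neighbours of i are
  the neurons in U - I, and i is simplicial iff the codewords containing i fill [I, U]: a
  clique on U - I lets every set between I and U pass the pairwise test.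
*)

section \<open>Evaluation at 0/1 points\<close>

(* The value of f at the 0/1 point with support c: a monomial takes the value 1 there
   iff all of its variables lie in c. *)
definition eval_at :: "nat set \<Rightarrow> poly2 \<Rightarrow> bit" where
  "eval_at c f = (\<Sum>m\<in>Poly_Mapping.keys f.
     if Poly_Mapping.keys m \<subseteq> c then Poly_Mapping.lookup f m else 0)"

lemma eval_at_zero [simp]: "eval_at c 0 = 0"
  by (simp add: eval_at_def)

lemma eval_at_one [simp]: "eval_at c 1 = 1"
  by (simp add: eval_at_def)

lemma eval_at_single:
  "eval_at c (Poly_Mapping.single m a) = (if Poly_Mapping.keys m \<subseteq> c then a else 0)"
  by (simp add: eval_at_def)

lemma eval_at_var: "eval_at c (var i) = (if i \<in> c then 1 else 0)"
  by (simp add: var_def eval_at_single)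

lemma eval_at_add: "eval_at c (f + g) = eval_at c f + eval_at c g"
  unfolding eval_at_def by (rule setsum_keys_plus_distrib) auto

lemma eval_at_diff: "eval_at c (f - g) = eval_at c f - eval_at c g"
  by (metis eval_at_add diff_add_cancel add_diff_cancel)

lemma eval_at_sum: "eval_at c (sum f A) = (\<Sum>a\<in>A. eval_at c (f a))"
  by (induction A rule: infinite_finite_induct) (auto simp: eval_at_add)

lemma keys_add_nat:
  "Poly_Mapping.keys (m + m' :: nat \<Rightarrow>\<^sub>0 nat) = Poly_Mapping.keys m \<union> Poly_Mapping.keys m'"
  by (auto simp: in_keys_iff lookup_add)

lemma poly2_eq_sum_single:
  "(f :: poly2) = (\<Sum>m\<in>Poly_Mapping.keys f. Poly_Mapping.single m (Poly_Mapping.lookup f m))"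
  by (rule poly_mapping_eqI)
    (simp add: lookup_sum lookup_single when_def in_keys_iff split: if_splits)

lemma eval_at_mult: "eval_at c (f * g) = eval_at c f * eval_at c g"
proof -
  let ?s = "\<lambda>(h::poly2) m. Poly_Mapping.single m (Poly_Mapping.lookup h m)"
  let ?F = "Poly_Mapping.keys f" and ?G = "Poly_Mapping.keys g"
  have "eval_at c (f * g) = eval_at c ((\<Sum>m\<in>?F. ?s f m) * (\<Sum>m'\<in>?G. ?s g m'))"
    using poly2_eq_sum_single[of f] poly2_eq_sum_single[of g] by simp
  also have "\<dots> = (\<Sum>m\<in>?F. \<Sum>m'\<in>?G. eval_at c (?s f m * ?s g m'))"
    by (simp add: sum_product eval_at_sum)
  also have "\<dots> = (\<Sum>m\<in>?F. \<Sum>m'\<in>?G. eval_at c (?s f m) * eval_at c (?s g m'))"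
    by (intro sum.cong refl)
      (simp del: mult_bit_eq_and add: mult_single eval_at_single keys_add_nat)
  also have "\<dots> = eval_at c (\<Sum>m\<in>?F. ?s f m) * eval_at c (\<Sum>m'\<in>?G. ?s g m')"
    by (simp only: eval_at_sum sum_product)
  finally show ?thesis
    using poly2_eq_sum_single[of f] poly2_eq_sum_single[of g] by simp
qed

lemma eval_at_prod: "eval_at c (prod f A) = (\<Prod>a\<in>A. eval_at c (f a))"
  by (induction A rule: infinite_finite_induct) (auto simp: eval_at_mult)

lemma prod_indicator:
  "finite A \<Longrightarrow> (\<Prod>a\<in>A. if P a then 1 else 0 :: 'a :: comm_semiring_1) =
     (if \<forall>a\<in>A. P a then 1 else 0)"
  by (induction A rule: finite_induct) auto

lemma eval_at_pm:
  assumes "finite s" "finite t"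
  shows "eval_at c (pm s t) = (if s \<subseteq> c \<and> t \<inter> c = {} then 1 else 0)"
proof -
  have "(\<Prod>j\<in>t. eval_at c (1 - var j)) = (\<Prod>j\<in>t. if j \<notin> c then 1 else 0)"
    by (rule prod.cong) (auto simp: eval_at_diff eval_at_var)
  then show ?thesis
    using assms by (auto simp: pm_def eval_at_mult eval_at_prod eval_at_var prod_indicator)
qed

lemma eval_at_rho:
  assumes "c \<subseteq> {1..n}" "\<sigma> \<subseteq> {1..n}"
  shows "eval_at c (rho n \<sigma>) = (if \<sigma> = c then 1 else 0)"
proof -
  have "\<sigma> \<subseteq> c \<and> ({1..n} - \<sigma>) \<inter> c = {} \<longleftrightarrow> \<sigma> = c"
    using assms by auto
  moreover have "finite \<sigma>"
    using assms(2) by (rule finite_subset) simp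
  ultimately show ?thesis
    by (simp add: rho_def eval_at_pm)
qed

lemma is_pm_finite: "is_pm n s t \<Longrightarrow> finite s \<and> finite t"
  unfolding is_pm_def by (meson finite_atLeastAtMost finite_subset)

lemma pm_eq_sum_rho:
  assumes st: "is_pm n s t"
  shows "pm s t = (\<Sum>\<sigma>\<in>interval s ({1..n} - t). rho n \<sigma>)"
proof -
  define F where "F = {1..n} - s - t"
  have "finite F" by (simp add: F_def)
  have fin: "finite s" "finite t"
    using is_pm_finite[OF st] by blast+
  have "pm s t = pm s t * (\<Prod>k\<in>F. var k + (1 - var k))"
    by simp
  also have "\<dots> = (\<Sum>X\<in>Pow F. pm s t * ((\<Prod>k\<in>X. var k) * (\<Prod>k\<in>F - X. 1 - var k)))"
    by (simp only: prod_add[OF \<open>finite F\<close>] sum_distrib_left)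
  also have "\<dots> = (\<Sum>X\<in>Pow F. rho n (s \<union> X))"
  proof (rule sum.cong[OF refl])
    fix X assume X: "X \<in> Pow F"
    then have "finite X" "finite (F - X)"
      using \<open>finite F\<close> finite_subset by auto
    moreover have "s \<inter> X = {}" "t \<inter> (F - X) = {}" "{1..n} - (s \<union> X) = t \<union> (F - X)"
      using X st by (auto simp: F_def is_pm_def)
    ultimately show "pm s t * ((\<Prod>k\<in>X. var k) * (\<Prod>k\<in>F - X. 1 - var k)) = rho n (s \<union> X)"
      using fin by (simp add: rho_def pm_def prod.union_disjoint mult_ac)
  qed
  also have "\<dots> = (\<Sum>\<sigma>\<in>(\<lambda>X. s \<union> X) ` Pow F. rho n \<sigma>)"
    by (rule sum.reindex[symmetric, unfolded comp_def]) (rule inj_onI, auto simp: F_def)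
  also have "(\<lambda>X. s \<union> X) ` Pow F = interval s ({1..n} - t)"
  proof
    show "(\<lambda>X. s \<union> X) ` Pow F \<subseteq> interval s ({1..n} - t)"
      using st by (auto simp: F_def interval_def is_pm_def)
    show "interval s ({1..n} - t) \<subseteq> (\<lambda>X. s \<union> X) ` Pow F"
    proof
      fix g assume "g \<in> interval s ({1..n} - t)"
      then have "g = s \<union> (g - s)" "g - s \<in> Pow F"
        by (auto simp: interval_def F_def)
      then show "g \<in> (\<lambda>X. s \<union> X) ` Pow F" by blast
    qed
  qed
  finally show ?thesis .
qed

section \<open>The canonical form of a code\<close>

(* pm s t vanishes at every codeword, see eval_at_pm *)
definition vanishes_on :: "nat set set \<Rightarrow> nat set \<Rightarrow> nat set \<Rightarrow> bool" where
  "vanishes_on C s t \<longleftrightarrow> (\<forall>c\<in>C. \<not> (s \<subseteq> c \<and> c \<inter> t = {}))"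

lemma in_JC_pm_iff:
  assumes C: "C \<subseteq> Pow {1..n}" and st: "is_pm n s t"
  shows "in_JC n C (pm s t) \<longleftrightarrow> vanishes_on C s t"
proof
  assume "in_JC n C (pm s t)"
  then obtain g where g: "pm s t = (\<Sum>\<sigma> \<in> Pow {1..n} - C. g \<sigma> * rho n \<sigma>)"
    unfolding in_JC_def by blast
  show "vanishes_on C s t"
    unfolding vanishes_on_def
  proof
    fix c assume "c \<in> C"
    with C have "c \<subseteq> {1..n}" by blast
    have "eval_at c (pm s t) = (\<Sum>\<sigma> \<in> Pow {1..n} - C. eval_at c (g \<sigma>) * eval_at c (rho n \<sigma>))"
      by (simp only: g eval_at_sum eval_at_mult)
    also have "\<dots> = 0"
      using \<open>c \<in> C\<close> \<open>c \<subseteq> {1..n}\<close> by (intro sum.neutral) (auto simp: eval_at_rho)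
    finally show "\<not> (s \<subseteq> c \<and> c \<inter> t = {})"
      using is_pm_finite[OF st] by (simp add: eval_at_pm Int_commute split: if_splits)
  qed
next
  assume "vanishes_on C s t"
  then have sub: "interval s ({1..n} - t) \<subseteq> Pow {1..n} - C"
    by (auto simp: interval_def vanishes_on_def)
  let ?g = "\<lambda>\<sigma>. if \<sigma> \<in> interval s ({1..n} - t) then 1 else 0 :: poly2"
  have "(\<Sum>\<sigma> \<in> Pow {1..n} - C. ?g \<sigma> * rho n \<sigma>)
      = (\<Sum>\<sigma> \<in> Pow {1..n} - C. if \<sigma> \<in> interval s ({1..n} - t) then rho n \<sigma> else 0)"
    by (rule sum.cong) auto
  also have "\<dots> = (\<Sum>\<sigma> \<in> interval s ({1..n} - t). rho n \<sigma>)"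
    using sub by (simp add: sum.inter_restrict[symmetric] Int_absorb1)
  finally show "in_JC n C (pm s t)"
    unfolding in_JC_def pm_eq_sum_rho[OF st]
    by (intro exI[of _ ?g]) (auto simp: in_ring_def)
qed

lemma pm_dvd_pm_iff:
  assumes st: "is_pm n s t" and st': "is_pm n s' t'"
  shows "pm s' t' dvd pm s t \<longleftrightarrow> s' \<subseteq> s \<and> t' \<subseteq> t"
proof
  have fin: "finite s" "finite t" "finite s'" "finite t'"
    using is_pm_finite st st' by blast+
  assume "pm s' t' dvd pm s t"
  then obtain q where q: "pm s t = pm s' t' * q"
    by (rule dvdE)
  have "s' \<subseteq> c \<and> t' \<inter> c = {}" if "s \<subseteq> c \<and> t \<inter> c = {}" for c
  proof -
    have "eval_at c (pm s t) = 1"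
      using that fin by (simp add: eval_at_pm)
    then have "eval_at c (pm s' t') * eval_at c q = 1"
      by (simp only: q eval_at_mult)
    then have "eval_at c (pm s' t') = 1"
      by (metis mult_zero_left bit_not_one_iff)
    then show ?thesis
      using fin by (simp add: eval_at_pm split: if_splits)
  qed
  moreover have "s \<subseteq> s \<and> t \<inter> s = {}" "s \<subseteq> {1..n} - t \<and> t \<inter> ({1..n} - t) = {}"
    using st by (auto simp: is_pm_def)
  ultimately have "s' \<subseteq> s" "t' \<inter> ({1..n} - t) = {}"
    by blast+
  then show "s' \<subseteq> s \<and> t' \<subseteq> t"
    using st' by (auto simp: is_pm_def)
next
  assume "s' \<subseteq> s \<and> t' \<subseteq> t"
  moreover have "finite s" "finite t"
    using is_pm_finite st by blast+
  ultimately have "pm s t = pm (s - s') (t - t') * pm s' t'"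
    by (simp add: pm_def prod.subset_diff[of s' s] prod.subset_diff[of t' t] mult_ac)
  then show "pm s' t' dvd pm s t" by simp
qed

lemma pm_eq_pm_iff:
  assumes "is_pm n s t" "is_pm n s' t'"
  shows "pm s' t' = pm s t \<longleftrightarrow> s' = s \<and> t' = t"
  using pm_dvd_pm_iff[OF assms] pm_dvd_pm_iff[OF assms(2,1)] by (metis dvd_refl subset_antisym)

lemma CF_iff:
  assumes "C \<subseteq> Pow {1..n}"
  shows "(s, t) \<in> CF n C \<longleftrightarrow> is_pm n s t \<and> vanishes_on C s t \<and>
     (\<forall>s' t'. is_pm n s' t' \<and> vanishes_on C s' t' \<and> s' \<subseteq> s \<and> t' \<subseteq> t \<longrightarrow> s' = s \<and> t' = t)"
proof (cases "is_pm n s t")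
  case True
  have "(\<exists>s' t'. is_pm n s' t' \<and> in_JC n C (pm s' t') \<and> pm s' t' dvd pm s t \<and> pm s' t' \<noteq> pm s t)
    \<longleftrightarrow> (\<exists>s' t'. is_pm n s' t' \<and> vanishes_on C s' t' \<and> s' \<subseteq> s \<and> t' \<subseteq> t \<and> \<not> (s' = s \<and> t' = t))"
    using in_JC_pm_iff[OF assms] pm_dvd_pm_iff[OF True] pm_eq_pm_iff[OF True] by meson
  then show ?thesis
    using True in_JC_pm_iff[OF assms True] unfolding CF_def by auto
qed (simp add: CF_def)

lemma subsets_eq_if_card_sum_le:
  assumes "finite s" "finite t" "s' \<subseteq> s" "t' \<subseteq> t" "card s + card t \<le> card s' + card t'"
  shows "s' = s \<and> t' = t"
proof -
  have "card s' \<le> card s" "card t' \<le> card t"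
    using assms by (simp_all add: card_mono)
  then have "card s' = card s" "card t' = card t"
    using assms(5) by linarith+
  then show ?thesis
    using assms by (simp add: card_subset_eq)
qed

lemma CF_below:
  assumes C: "C \<subseteq> Pow {1..n}" and "is_pm n s t" "vanishes_on C s t"
  shows "\<exists>s' \<subseteq> s. \<exists>t' \<subseteq> t. (s', t') \<in> CF n C"
proof -
  define P where "P s' t' \<longleftrightarrow> is_pm n s' t' \<and> vanishes_on C s' t' \<and> s' \<subseteq> s \<and> t' \<subseteq> t"
    for s' t'
  have "P s t"
    using assms by (simp add: P_def)
  then obtain p where "case_prod P p"
    and least: "\<And>q. case_prod P q \<Longrightarrow> card (fst p) + card (snd p) \<le> card (fst q) + card (snd q)"
    using ex_has_least_nat[of "case_prod P" "(s, t)" "\<lambda>q. card (fst q) + card (snd q)"] by blast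
  then obtain s0 t0 where P0: "P s0 t0" and least0: "\<And>s' t'. P s' t' \<Longrightarrow> card s0 + card t0 \<le> card s' + card t'"
    by (metis case_prod_conv fst_conv snd_conv prod.collapse)
  have "s' = s0 \<and> t' = t0"
    if "is_pm n s' t'" "vanishes_on C s' t'" "s' \<subseteq> s0" "t' \<subseteq> t0" for s' t'
  proof (rule subsets_eq_if_card_sum_le)
    show "finite s0" "finite t0"
      using P0 is_pm_finite by (auto simp: P_def)
    show "card s0 + card t0 \<le> card s' + card t'"
      using that P0 by (intro least0) (auto simp: P_def)
  qed (use that in blast)+
  then have "(s0, t0) \<in> CF n C"
    using P0 unfolding CF_iff[OF C] P_def by blast
  then show ?thesis
    using P0 by (auto simp: P_def)
qed

section \<open>Restrictions of a code to pairs of neurons\<close>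

lemma code_subset_Pow: "is_code n C \<Longrightarrow> C \<subseteq> Pow {1..n}"
  by (simp add: is_code_def)

lemma code_covers: "is_code n C \<Longrightarrow> j \<in> {1..n} \<Longrightarrow> \<exists>c \<in> C. j \<in> c"
  by (simp add: is_code_def)

lemma empty_in_code: "is_code n C \<Longrightarrow> {} \<in> C"
  by (simp add: is_code_def)

definition restriction :: "nat set set \<Rightarrow> nat set \<Rightarrow> nat set set" where
  "restriction C A = (\<lambda>c. c \<inter> A) ` C"

lemma restriction_subset_Pow: "restriction C A \<subseteq> Pow A"
  by (auto simp: restriction_def)

lemma restriction_eq_self: "C \<subseteq> Pow A \<Longrightarrow> restriction C A = C"
  unfolding restriction_def by (auto simp: image_iff Int_absorb2)

lemma empty_in_restriction: "is_code n C \<Longrightarrow> {} \<in> restriction C A"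
  unfolding restriction_def by (force dest: empty_in_code)

lemma vanishes_on_Diff_iff:
  assumes "s \<subseteq> A"
  shows "vanishes_on C s (A - s) \<longleftrightarrow> s \<notin> restriction C A"
proof -
  have "s \<subseteq> c \<and> c \<inter> (A - s) = {} \<longleftrightarrow> c \<inter> A = s" for c
    using assms by blast
  then show ?thesis
    by (auto simp: vanishes_on_def restriction_def)
qed

lemma card_ge_2_if_vanishes_on:
  assumes code: "is_code n C" and st: "is_pm n s t" and "vanishes_on C s t"
  shows "2 \<le> card s + card t"
proof (rule ccontr)
  assume "\<not> 2 \<le> card s + card t"
  then have "card s + card t \<le> 1" by simp
  moreover have "finite s" "finite t"
    using is_pm_finite[OF st] by blast+
  moreover have "s \<noteq> {}"
    using empty_in_code[OF code] \<open>vanishes_on C s t\<close> by (auto simp: vanishes_on_def)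
  ultimately have "card s = 1" "card t = 0"
    using card_gt_0_iff[of s] by linarith+
  then obtain j where "s = {j}" "t = {}"
    using \<open>finite t\<close> by (auto simp: card_1_singleton_iff)
  moreover have "j \<in> {1..n}"
    using st \<open>s = {j}\<close> by (simp add: is_pm_def)
  then obtain c where "c \<in> C" "j \<in> c"
    using code_covers[OF code] by blast
  ultimately show False
    using \<open>vanishes_on C s t\<close> by (auto simp: vanishes_on_def)
qed

lemma CF_iff_vanishes_on_if_card_2:
  assumes code: "is_code n C" and st: "is_pm n s t" and card: "card s + card t = 2"
  shows "(s, t) \<in> CF n C \<longleftrightarrow> vanishes_on C s t"
proof -
  have "s' = s \<and> t' = t"
    if "is_pm n s' t'" "vanishes_on C s' t'" "s' \<subseteq> s" "t' \<subseteq> t" for s' t'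
  proof (rule subsets_eq_if_card_sum_le)
    show "finite s" "finite t"
      using is_pm_finite[OF st] by blast+
    show "card s + card t \<le> card s' + card t'"
      using card card_ge_2_if_vanishes_on[OF code that(1,2)] by simp
  qed (use that in blast)+
  then show ?thesis
    using st unfolding CF_iff[OF code_subset_Pow[OF code]] by blast
qed

lemma G_edge_iff_restriction:
  assumes code: "is_code n C"
  shows "G_edge n C a b \<longleftrightarrow>
    a \<in> {1..n} \<and> b \<in> {1..n} \<and> a \<noteq> b \<and> restriction C {a, b} = Pow {a, b}"
proof (cases "a \<in> {1..n} \<and> b \<in> {1..n} \<and> a \<noteq> b")
  case True
  have pm: "is_pm n s ({a, b} - s)" and card: "card s + card ({a, b} - s) = 2"
    if "s \<subseteq> {a, b}" for s
  proof -
    show "is_pm n s ({a, b} - s)"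
      using True that by (auto simp: is_pm_def)
    have "card s + card ({a, b} - s) = card (s \<union> ({a, b} - s))"
      using that by (intro card_Un_disjoint[symmetric]) (auto intro: finite_subset)
    moreover have "s \<union> ({a, b} - s) = {a, b}"
      using that by blast
    ultimately show "card s + card ({a, b} - s) = 2"
      using True by simp
  qed
  have "(\<exists>(s, t) \<in> CF n C. s \<union> t = {a, b}) \<longleftrightarrow> (\<exists>s \<subseteq> {a, b}. s \<notin> restriction C {a, b})"
  proof
    assume "\<exists>(s, t) \<in> CF n C. s \<union> t = {a, b}"
    then obtain s t where st: "(s, t) \<in> CF n C" "s \<union> t = {a, b}"
      by blast
    then have "t = {a, b} - s" "vanishes_on C s t"
      by (auto simp: CF_iff[OF code_subset_Pow[OF code]] is_pm_def)
    moreover have "s \<subseteq> {a, b}"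
      using st(2) by blast
    ultimately show "\<exists>s \<subseteq> {a, b}. s \<notin> restriction C {a, b}"
      using vanishes_on_Diff_iff by blast
  next
    assume "\<exists>s \<subseteq> {a, b}. s \<notin> restriction C {a, b}"
    then obtain s where "s \<subseteq> {a, b}" "s \<notin> restriction C {a, b}"
      by blast
    then have "(s, {a, b} - s) \<in> CF n C"
      using CF_iff_vanishes_on_if_card_2[OF code pm card] vanishes_on_Diff_iff by blast
    moreover have "s \<union> ({a, b} - s) = {a, b}"
      using \<open>s \<subseteq> {a, b}\<close> by blast
    ultimately show "\<exists>(s, t) \<in> CF n C. s \<union> t = {a, b}"
      by blast
  qed
  then show ?thesis
    using True restriction_subset_Pow[of C "{a, b}"] by (auto simp: G_edge_def)
qed (auto simp: G_edge_def)

lemma P_less_iff_restriction: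
  assumes code: "is_code n C"
  shows "P_less n C j i \<longleftrightarrow>
    i \<in> {1..n} \<and> j \<in> {1..n} \<and> j \<noteq> i \<and> {j} \<notin> restriction C {i, j}"
proof (cases "i \<in> {1..n} \<and> j \<in> {1..n} \<and> j \<noteq> i")
  case True
  then have "is_pm n {j} {i}" "{i, j} - {j} = {i}"
    by (auto simp: is_pm_def)
  then show ?thesis
    using True CF_iff_vanishes_on_if_card_2[OF code] vanishes_on_Diff_iff[of "{j}" "{i, j}" C]
    by (simp add: P_less_def)
qed (auto simp: P_less_def CF_def is_pm_def)

lemma degree_two_mem_iff:
  assumes code: "is_code n C" and deg: "degree_two n C" and c: "c \<subseteq> {1..n}"
  shows "c \<in> C \<longleftrightarrow>
    (\<forall>a \<in> {1..n}. \<forall>b \<in> {1..n}. a \<noteq> b \<longrightarrow> c \<inter> {a, b} \<in> restriction C {a, b})"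
proof
  assume pairs: "\<forall>a \<in> {1..n}. \<forall>b \<in> {1..n}. a \<noteq> b \<longrightarrow> c \<inter> {a, b} \<in> restriction C {a, b}"
  note Pow = code_subset_Pow[OF code]
  show "c \<in> C"
  proof (rule ccontr)
    assume "c \<notin> C"
    moreover have "restriction C {1..n} = C"
      by (rule restriction_eq_self[OF Pow])
    ultimately have "vanishes_on C c ({1..n} - c)"
      using c by (simp add: vanishes_on_Diff_iff)
    moreover have "is_pm n c ({1..n} - c)"
      using c by (auto simp: is_pm_def)
    ultimately obtain s t where st: "s \<subseteq> c" "t \<subseteq> {1..n} - c" "(s, t) \<in> CF n C"
      by (metis CF_below[OF Pow])
    then have st': "is_pm n s t" "vanishes_on C s t"
      unfolding CF_iff[OF Pow] by blast+
    have "card s + card t = 2"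
      using deg st(3) unfolding degree_two_def by fastforce
    then have "card (s \<union> t) = 2"
      using is_pm_finite[OF st'(1)] st(1,2) by (subst card_Un_disjoint) auto
    then obtain a b where ab: "s \<union> t = {a, b}" "a \<noteq> b"
      unfolding card_2_iff by blast
    then have "s = c \<inter> {a, b}" "t = {a, b} - s"
      using st(1,2) by blast+
    moreover have "a \<in> {1..n}" "b \<in> {1..n}"
      using st'(1) ab(1) unfolding is_pm_def by blast+
    ultimately have "s \<in> restriction C {a, b}"
      using pairs ab(2) by blast
    moreover have "s \<subseteq> {a, b}"
      using ab(1) by blast
    ultimately show False
      using st'(2) \<open>t = {a, b} - s\<close> vanishes_on_Diff_iff by blast
  qed
qed (unfold restriction_def, blast)

lemma P_minimal_iff_restriction:
  assumes code: "is_code n C"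
  shows "P_minimal n C i \<longleftrightarrow>
    i \<in> {1..n} \<and> (\<forall>j \<in> {1..n}. j \<noteq> i \<longrightarrow> {j} \<in> restriction C {i, j})"
  using P_less_iff_restriction[OF code] by (auto simp: P_minimal_def)

lemma delete_neuron_subset_if_P_minimal:
  assumes code: "is_code n C" and deg: "degree_two n C" and "P_minimal n C i"
  shows "delete_neuron C i \<subseteq> C"
proof
  fix d assume "d \<in> delete_neuron C i"
  then obtain c where c: "c \<in> C" "d = c - {i}"
    by (auto simp: delete_neuron_def)
  have "d \<inter> {a, b} \<in> restriction C {a, b}"
    if "a \<in> {1..n}" "b \<in> {1..n}" "a \<noteq> b" for a b
  proof (cases "i \<in> {a, b}")
    case True
    define j where "j = (if a = i then b else a)"
    have j: "{a, b} = {i, j}" "j \<in> {1..n}" "j \<noteq> i"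
      using True that by (auto simp: j_def)
    then have "{j} \<in> restriction C {a, b}"
      using \<open>P_minimal n C i\<close> P_minimal_iff_restriction[OF code] by simp
    moreover have "d \<inter> {a, b} = {} \<or> d \<inter> {a, b} = {j}"
      using c(2) j(1) by blast
    ultimately show ?thesis
      using empty_in_restriction[OF code, of "{a, b}"] by (elim disjE) simp_all
  next
    case False
    then have "d \<inter> {a, b} = c \<inter> {a, b}"
      using c(2) by blast
    then show ?thesis
      using c(1) by (simp add: restriction_def)
  qed
  moreover have "d \<subseteq> {1..n}"
    using c code_subset_Pow[OF code] by blast
  ultimately show "d \<in> C"
    using degree_two_mem_iff[OF code deg] by blast
qed

lemma P_minimal_if_delete_neuron_subset:
  assumes code: "is_code n C" and "i \<in> {1..n}" and del: "delete_neuron C i \<subseteq> C"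
  shows "P_minimal n C i"
proof -
  have "{j} \<in> restriction C {i, j}" if j: "j \<in> {1..n}" "j \<noteq> i" for j
  proof -
    obtain c where "c \<in> C" "j \<in> c"
      using code_covers[OF code j(1)] by blast
    then have "c - {i} \<in> C" "(c - {i}) \<inter> {i, j} = {j}"
      using del j(2) by (auto simp: delete_neuron_def)
    then show ?thesis
      unfolding restriction_def by blast
  qed
  then show ?thesis
    using \<open>i \<in> {1..n}\<close> P_minimal_iff_restriction[OF code] by blast
qed

definition codewords_with :: "nat set set \<Rightarrow> nat \<Rightarrow> nat set set" where
  "codewords_with C i = {c \<in> C. i \<in> c}"

lemma codewords_with_nonempty: "is_code n C \<Longrightarrow> i \<in> {1..n} \<Longrightarrow> codewords_with C i \<noteq> {}"
  using code_covers unfolding codewords_with_def by blast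

lemma Union_codewords_with_subset: "is_code n C \<Longrightarrow> \<Union> (codewords_with C i) \<subseteq> {1..n}"
  using code_subset_Pow unfolding codewords_with_def by blast

lemma Inter_interval: "s \<subseteq> t \<Longrightarrow> \<Inter> (interval s t) = s"
  unfolding interval_def by blast

lemma Union_interval: "s \<subseteq> t \<Longrightarrow> \<Union> (interval s t) = t"
  unfolding interval_def by blast

lemma G_nbrs_eq_if_P_minimal:
  assumes code: "is_code n C" and "P_minimal n C i"
  shows "G_nbrs n C i = \<Union> (codewords_with C i) - \<Inter> (codewords_with C i)"
proof -
  have i: "i \<in> {1..n}" and single: "\<And>j. j \<in> {1..n} \<Longrightarrow> j \<noteq> i \<Longrightarrow> {j} \<in> restriction C {i, j}"
    using assms P_minimal_iff_restriction[OF code] by blast+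
  have "G_edge n C i j \<longleftrightarrow> j \<in> \<Union> (codewords_with C i) - \<Inter> (codewords_with C i)" for j
  proof (cases "j \<in> {1..n} \<and> j \<noteq> i")
    case True
    have "{i, j} \<in> restriction C {i, j} \<longleftrightarrow> j \<in> \<Union> (codewords_with C i)"
      by (auto simp: restriction_def codewords_with_def)
    moreover have "{i} \<in> restriction C {i, j} \<longleftrightarrow> j \<notin> \<Inter> (codewords_with C i)"
      using True by (auto simp: restriction_def codewords_with_def)
    moreover have "restriction C {i, j} = Pow {i, j} \<longleftrightarrow>
        {i} \<in> restriction C {i, j} \<and> {i, j} \<in> restriction C {i, j}"
      using restriction_subset_Pow[of C "{i, j}"] empty_in_restriction[OF code] single[of j] True
      by (auto simp: Pow_insert)
    ultimately show ?thesis
      using True i by (auto simp: G_edge_iff_restriction[OF code])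
  next
    case False
    moreover have "\<Union> (codewords_with C i) \<subseteq> {1..n}" "i \<in> \<Inter> (codewords_with C i)"
      using Union_codewords_with_subset[OF code] by (auto simp: codewords_with_def)
    ultimately show ?thesis
      by (auto simp: G_edge_def)
  qed
  then show ?thesis
    by (auto simp: G_nbrs_def)
qed

lemma interval_subset_if_simplicial:
  assumes code: "is_code n C" and deg: "degree_two n C"
    and P_min: "P_minimal n C i" and simpl: "simplicial n C i"
  defines "L \<equiv> codewords_with C i"
  shows "interval (\<Inter> L) (\<Union> L) \<subseteq> C"
proof
  fix g assume g: "g \<in> interval (\<Inter> L) (\<Union> L)"
  have nbrs: "G_nbrs n C i = \<Union> L - \<Inter> L"
    using G_nbrs_eq_if_P_minimal[OF code P_min] by (simp add: L_def)
  have "L \<subseteq> C"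
    by (auto simp: L_def codewords_with_def)
  \<comment> \<open>Every codeword containing i agrees with g outside the neighbourhood of i.\<close>
  have agree: "\<exists>d \<in> L. d \<inter> {a, b} = g \<inter> {a, b}" if a: "a \<notin> \<Union> L - \<Inter> L" for a b
  proof -
    have "\<Inter> L \<subseteq> g" "g \<subseteq> \<Union> L"
      using g by (auto simp: interval_def)
    then have "\<exists>d \<in> L. b \<in> d \<longleftrightarrow> b \<in> g"
      by (cases "b \<in> g") blast+
    then obtain d where "d \<in> L" "b \<in> d \<longleftrightarrow> b \<in> g"
      by blast
    moreover have "a \<in> d \<longleftrightarrow> a \<in> g"
      using \<open>d \<in> L\<close> \<open>\<Inter> L \<subseteq> g\<close> \<open>g \<subseteq> \<Union> L\<close> a by blast
    ultimately show ?thesis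
      by blast
  qed
  have "g \<inter> {a, b} \<in> restriction C {a, b}"
    if "a \<in> {1..n}" "b \<in> {1..n}" "a \<noteq> b" for a b
  proof (cases "a \<in> \<Union> L - \<Inter> L \<and> b \<in> \<Union> L - \<Inter> L")
    case True
    then have "G_edge n C a b"
      using simpl that(3) nbrs by (simp add: simplicial_def)
    then show ?thesis
      using G_edge_iff_restriction[OF code] by auto
  next
    case False
    then obtain d where "d \<in> L" "d \<inter> {a, b} = g \<inter> {a, b}"
      using agree[of a b] agree[of b a] insert_commute[of a b "{}"] by metis
    then show ?thesis
      using \<open>L \<subseteq> C\<close> unfolding restriction_def by blast
  qed
  moreover have "g \<subseteq> {1..n}"
    using g Union_codewords_with_subset[OF code] unfolding interval_def L_def by blast
  ultimately show "g \<in> C"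
    using degree_two_mem_iff[OF code deg] by blast
qed

lemma simplicial_iff_interval:
  assumes code: "is_code n C" and deg: "degree_two n C" and P_min: "P_minimal n C i"
  defines "L \<equiv> codewords_with C i"
  shows "simplicial n C i \<longleftrightarrow> L = interval (\<Inter> L) (\<Union> L)"
proof
  have "i \<in> \<Inter> L"
    by (auto simp: L_def codewords_with_def)
  moreover assume "simplicial n C i"
  then have "interval (\<Inter> L) (\<Union> L) \<subseteq> C"
    using interval_subset_if_simplicial[OF code deg P_min] by (simp add: L_def)
  ultimately show "L = interval (\<Inter> L) (\<Union> L)"
    by (auto simp: interval_def L_def codewords_with_def)
next
  assume L: "L = interval (\<Inter> L) (\<Union> L)"
  have "G_edge n C j l" if "j \<in> \<Union> L - \<Inter> L" "l \<in> \<Union> L - \<Inter> L" "j \<noteq> l" for j l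
  proof -
    have "Pow {j, l} \<subseteq> restriction C {j, l}"
    proof
      fix x assume "x \<in> Pow {j, l}"
      then have "x \<subseteq> {j, l}" by simp
      have "\<Inter> L \<union> x \<in> interval (\<Inter> L) (\<Union> L)"
        using \<open>j \<in> \<Union> L - \<Inter> L\<close> \<open>l \<in> \<Union> L - \<Inter> L\<close> \<open>x \<subseteq> {j, l}\<close>
        unfolding interval_def by blast
      then have "\<Inter> L \<union> x \<in> L"
        by (simp flip: L)
      moreover have "(\<Inter> L \<union> x) \<inter> {j, l} = x"
        using \<open>j \<in> \<Union> L - \<Inter> L\<close> \<open>l \<in> \<Union> L - \<Inter> L\<close> \<open>x \<subseteq> {j, l}\<close> by blast
      moreover have "L \<subseteq> C"
        by (simp add: L_def codewords_with_def)
      ultimately show "x \<in> restriction C {j, l}"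
        unfolding restriction_def by (metis image_eqI subsetD)
    qed
    then have "restriction C {j, l} = Pow {j, l}"
      using restriction_subset_Pow by blast
    moreover have "j \<in> {1..n}" "l \<in> {1..n}"
      using that(1,2) Union_codewords_with_subset[OF code, of i] unfolding L_def by blast+
    ultimately show ?thesis
      using that(3) by (simp add: G_edge_iff_restriction[OF code])
  qed
  then show "simplicial n C i"
    using G_nbrs_eq_if_P_minimal[OF code P_min] by (simp add: simplicial_def L_def)
qed

section \<open>Piercings\<close>

lemma interval_if_is_piercing:
  assumes "is_piercing n C i k"
  defines "I \<equiv> \<Inter> (codewords_with C i)" and "U \<equiv> \<Union> (codewords_with C i)"
  shows "delete_neuron C i \<subseteq> C \<and> codewords_with C i = interval I U \<and> card (U - I) = k"
proof -
  obtain s t where st: "s \<subseteq> t" "t \<subseteq> {1..n} - {i}" "card (t - s) = k"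
    and sub: "interval s t \<subseteq> delete_neuron C i"
    and decomp: "C = delete_neuron C i \<union> interval (insert i s) (insert i t)"
    using assms(1) unfolding is_piercing_def by blast
  have mem: "c \<in> C \<longleftrightarrow> c \<in> delete_neuron C i \<or> c \<in> interval (insert i s) (insert i t)" for c
    using decomp by blast
  have "i \<notin> d" if "d \<in> delete_neuron C i" for d
    using that by (auto simp: delete_neuron_def)
  then have with_i: "codewords_with C i = interval (insert i s) (insert i t)"
    using mem by (auto simp: codewords_with_def interval_def)
  moreover have "insert i s \<subseteq> insert i t"
    using st(1) by blast
  ultimately have "I = insert i s" "U = insert i t"
    by (simp_all add: I_def U_def Inter_interval Union_interval)
  moreover have "delete_neuron C i \<subseteq> C"
  proof
    fix d assume "d \<in> delete_neuron C i"
    then obtain c where c: "c \<in> C" "d = c - {i}"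
      by (auto simp: delete_neuron_def)
    show "d \<in> C"
    proof (cases "i \<in> c")
      case True
      then have "c \<in> interval (insert i s) (insert i t)"
        using c(1) with_i by (auto simp: codewords_with_def)
      then have "d \<in> interval s t"
        using c(2) st by (auto simp: interval_def)
      then show ?thesis
        using sub mem by blast
    next
      case False
      then show ?thesis
        using c by simp
    qed
  qed
  moreover have "insert i t - insert i s = t - s"
    using st(2) by blast
  ultimately show ?thesis
    using with_i st(3) by simp
qed

lemma is_piercing_if_interval:
  assumes C: "C \<subseteq> Pow {1..n}" and L: "codewords_with C i \<noteq> {}"
    and del: "delete_neuron C i \<subseteq> C"
  defines "I \<equiv> \<Inter> (codewords_with C i)" and "U \<equiv> \<Union> (codewords_with C i)"
  assumes with_i: "codewords_with C i = interval I U" and card: "card (U - I) = k"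
  shows "is_piercing n C i k"
proof -
  have "i \<in> I" "I \<subseteq> U" "U \<subseteq> {1..n}"
    using L C by (auto simp: I_def U_def codewords_with_def)
  then have IU: "insert i (I - {i}) = I" "insert i (U - {i}) = U" "(U - {i}) - (I - {i}) = U - I"
    by auto
  show ?thesis
    unfolding is_piercing_def
  proof (intro exI conjI)
    show "I - {i} \<subseteq> U - {i}" "U - {i} \<subseteq> {1..n} - {i}" "card ((U - {i}) - (I - {i})) = k"
      using \<open>I \<subseteq> U\<close> \<open>U \<subseteq> {1..n}\<close> card IU(3) by auto
    show "interval (I - {i}) (U - {i}) \<subseteq> delete_neuron C i"
    proof
      fix g assume "g \<in> interval (I - {i}) (U - {i})"
      then have "insert i g \<in> codewords_with C i" "g = insert i g - {i}"
        using with_i \<open>i \<in> I\<close> \<open>I \<subseteq> U\<close> by (auto simp: interval_def)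
      then show "g \<in> delete_neuron C i"
        unfolding delete_neuron_def codewords_with_def by blast
    qed
    have "C = delete_neuron C i \<union> codewords_with C i"
    proof
      show "C \<subseteq> delete_neuron C i \<union> codewords_with C i"
        by (auto simp: delete_neuron_def codewords_with_def image_iff)
      show "delete_neuron C i \<union> codewords_with C i \<subseteq> C"
        using del by (auto simp: codewords_with_def)
    qed
    then show "C = delete_neuron C i \<union> interval (insert i (I - {i})) (insert i (U - {i}))"
      using with_i IU by simp
  qed
qed

lemma is_piercing_iff_interval:
  assumes "C \<subseteq> Pow {1..n}" "codewords_with C i \<noteq> {}"
  defines "I \<equiv> \<Inter> (codewords_with C i)" and "U \<equiv> \<Union> (codewords_with C i)"
  shows "is_piercing n C i k \<longleftrightarrow>
    delete_neuron C i \<subseteq> C \<and> codewords_with C i = interval I U \<and> card (U - I) = k"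
  using interval_if_is_piercing[of n C i k] is_piercing_if_interval[OF assms(1,2)]
  unfolding I_def U_def by blast

theorem proposition1p7:
  fixes n k i :: nat and C :: "nat set set"
  assumes "is_code n C"
    and "degree_two n C"
    and "i \<in> {1..n}"
  shows "is_piercing n C i k \<longleftrightarrow>
           elimination_neuron n C i \<and> card (G_nbrs n C i) = k"
proof -
  note code = assms(1) and deg = assms(2) and i = assms(3)
  define L where "L = codewords_with C i"
  have "is_piercing n C i k \<longleftrightarrow>
      delete_neuron C i \<subseteq> C \<and> L = interval (\<Inter> L) (\<Union> L) \<and> card (\<Union> L - \<Inter> L) = k"
    unfolding L_def
    by (rule is_piercing_iff_interval[OF code_subset_Pow[OF code] codewords_with_nonempty[OF code i]])
  also have "\<dots> \<longleftrightarrow> P_minimal n C i \<and> L = interval (\<Inter> L) (\<Union> L) \<and> card (\<Union> L - \<Inter> L) = k"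
    using delete_neuron_subset_if_P_minimal[OF code deg] P_minimal_if_delete_neuron_subset[OF code i]
    by blast
  also have "\<dots> \<longleftrightarrow> P_minimal n C i \<and> simplicial n C i \<and> card (G_nbrs n C i) = k"
    using simplicial_iff_interval[OF code deg] G_nbrs_eq_if_P_minimal[OF code]
    by (auto simp: L_def)
  also have "\<dots> \<longleftrightarrow> elimination_neuron n C i \<and> card (G_nbrs n C i) = k"
    using i by (auto simp: elimination_neuron_def)
  finally show ?thesis .
qed

end
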